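(* There exists a function $f\in C^2(\mathbb{R})$ such that for every $x\in\mathbb{R}$ there is a polynomial $P_x$ of degree at most $2$ with $$\liminf_{y\to x}\frac{f(y)-P_x(y)}{|y-x|^k}>-\infty\quad\text{for every } k>2,$$ but for no integer $k\ge 3$ does $f$ have the Lusin property of class $C^k$; i.e., for each $k\ge3$ there is $\varepsilon>0$ such that every $g\in C^k(\mathbb{R})$ satisfies $\mathcal{L}^1(\{x\in\mathbb{R}: f(x)\neq g(x)\})>\varepsilon$.
   Context: $\mathcal{L}^1$ denotes Lebesgue measure on $\mathbb{R}$. *)

theory Defs
  imports "HOL-Analysis.Analysis" "HOL-Computational_Algebra.Polynomial"
begin

definition Ck :: "nat \<Rightarrow> (real \<Rightarrow> real) \<Rightarrow> bool" where
  "Ck k f \<longleftrightarrow> (\<forall>j<k. \<forall>x. ((deriv ^^ j) f) differentiable (at x))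
                 \<and> continuous_on UNIV ((deriv ^^ k) f)"

end

theory Submission
  imports Defs
begin

text \<open>
  The example is a second antiderivative \<open>F\<close> of the Takagi-type function
  \<open>T x = (\<Sum>m. 18^-m * d(18^(2m) * x))\<close>, where \<open>d\<close> is the distance to the nearest integer.
  Since \<open>T \<ge> 0\<close>, \<open>F\<close> is convex and lies above its tangent lines, so the tangent polynomial at
  \<open>x\<close> has nonnegative remainder.

  If \<open>g\<close> is \<open>C^3\<close> and agrees with \<open>F\<close> on \<open>A \<subseteq> [0,1]\<close>, then \<open>F' = g'\<close> at the
  accumulation points of \<open>A\<close> and \<open>T = g''\<close> at the accumulation points of those, so \<open>T\<close> is
  Lipschitz on \<open>A\<close> up to a countable set. But \<open>T\<close> is Lipschitz on no set of outer measure
  \<open>> 1/2\<close>: on each half-cell of length \<open>1/(2 * 18^(2n))\<close> the \<open>n\<close>-th term has slope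
  \<open>\<plusminus>18^n\<close> and dominates all the others, so for large \<open>n\<close> a Lipschitz set meets each
  half-cell in a piece of length about \<open>1/(16 * 18^(2n))\<close>. Hence \<open>{F \<noteq> g}\<close> has measure
  at least \<open>1/2\<close>.
\<close>

definition dist_to_int :: "real \<Rightarrow> real" where
  "dist_to_int t = \<bar>t - of_int \<lfloor>t + 1/2\<rfloor>\<bar>"

lemma dist_to_int_nonneg: "0 \<le> dist_to_int t"
  by (simp add: dist_to_int_def)

lemma dist_to_int_le_half: "dist_to_int t \<le> 1/2"
  unfolding dist_to_int_def
  using of_int_floor_le[of "t + 1/2"] real_of_int_floor_add_one_gt[of "t + 1/2"] by linarith

lemma one_le_abs_of_int_diff:
  assumes "m \<noteq> n" shows "1 \<le> \<bar>real_of_int m - of_int n\<bar>"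
proof -
  have "1 \<le> \<bar>m - n\<bar>" using assms by linarith
  then show ?thesis by (metis of_int_1_le_iff of_int_abs of_int_diff)
qed
lemma dist_to_int_le: "dist_to_int t \<le> \<bar>t - of_int n\<bar>"
proof (cases "n = \<lfloor>t + 1/2\<rfloor>")
  case False
  then show ?thesis
    using one_le_abs_of_int_diff[OF False] dist_to_int_le_half[of t] unfolding dist_to_int_def by arith
qed (simp add: dist_to_int_def)
lemma dist_to_int_eq:
  assumes "\<bar>t - of_int n\<bar> \<le> 1/2"
  shows "dist_to_int t = \<bar>t - of_int n\<bar>"
proof (cases "n = \<lfloor>t + 1/2\<rfloor>")
  case False
  then show ?thesis
    using one_le_abs_of_int_diff[OF False] dist_to_int_le_half[of t] assms
    unfolding dist_to_int_def by arith
qed (simp add: dist_to_int_def)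

lemma dist_to_int_lipschitz: "\<bar>dist_to_int t - dist_to_int s\<bar> \<le> \<bar>t - s\<bar>"
  using dist_to_int_le[of t "\<lfloor>s + 1/2\<rfloor>"] dist_to_int_le[of s "\<lfloor>t + 1/2\<rfloor>"]
  unfolding dist_to_int_def[of s] dist_to_int_def[of t] by linarith

lemma dist_to_int_isometric_on_half_cell:
  assumes "of_int j \<le> 2 * t" "2 * t \<le> of_int j + 1" "of_int j \<le> 2 * s" "2 * s \<le> of_int j + 1"
  shows "\<bar>dist_to_int t - dist_to_int s\<bar> = \<bar>t - s\<bar>"
proof -
  define k where "k = (j + 1) div 2"
  have "of_int j = 2 * real_of_int k \<or> of_int j = 2 * real_of_int k - 1"
    unfolding k_def by (cases "even j") (auto elim!: evenE oddE)
  then have "\<bar>t - of_int k\<bar> \<le> 1/2" "\<bar>s - of_int k\<bar> \<le> 1/2"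
    and "(of_int k \<le> t \<and> of_int k \<le> s) \<or> (t \<le> of_int k \<and> s \<le> of_int k)"
    using assms by linarith+
  then show ?thesis
    by (simp add: dist_to_int_eq) arith
qed

lemma continuous_dist_to_int: "continuous_on UNIV dist_to_int"
  unfolding continuous_on_iff dist_real_def
  using dist_to_int_lipschitz le_less_trans by blast

definition takagi_term :: "nat \<Rightarrow> real \<Rightarrow> real" where
  "takagi_term m x = (1/18)^m * dist_to_int (18^(2*m) * x)"

definition takagi :: "real \<Rightarrow> real" where
  "takagi x = (\<Sum>m. takagi_term m x)"

lemma takagi_term_nonneg: "0 \<le> takagi_term m x"
  by (simp add: takagi_term_def dist_to_int_nonneg)

lemma takagi_term_le: "takagi_term m x \<le> (1/18)^m / 2"
  using mult_left_mono[OF dist_to_int_le_half, of "(1/18)^m"]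
  by (simp add: takagi_term_def)

lemma summable_takagi_bound: "summable (\<lambda>m. (1/18::real)^m / 2)"
  by (intro summable_divide summable_geometric) simp

lemma summable_takagi_term: "summable (\<lambda>m. takagi_term m x)"
  using takagi_term_le
  by (intro summable_comparison_test[OF _ summable_takagi_bound]) (auto simp: takagi_term_nonneg)

lemma takagi_nonneg: "0 \<le> takagi x"
  unfolding takagi_def by (rule suminf_nonneg[OF summable_takagi_term takagi_term_nonneg])

lemma continuous_takagi: "continuous_on UNIV takagi"
proof -
  have "uniform_limit UNIV (\<lambda>n x. \<Sum>m<n. takagi_term m x) takagi sequentially"
    unfolding takagi_def using takagi_term_le
    by (intro Weierstrass_m_test[OF _ summable_takagi_bound]) (auto simp: takagi_term_nonneg)
  moreover have "continuous_on UNIV (takagi_term m)" for m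
    unfolding takagi_term_def
    by (intro continuous_intros continuous_on_compose2[OF continuous_dist_to_int]) auto
  ultimately show ?thesis
    by (intro uniform_limit_theorem) (auto intro!: always_eventually continuous_on_sum)
qed

lemma takagi_term_diff:
  "\<bar>takagi_term m x - takagi_term m y\<bar> =
     (1/18)^m * \<bar>dist_to_int (18^(2*m) * x) - dist_to_int (18^(2*m) * y)\<bar>"
  by (simp add: takagi_term_def right_diff_distrib[symmetric] abs_mult)

lemma takagi_scale: "(1/18::real)^m * 18^(2*m) = 18^m"
  by (simp add: power_mult power2_eq_square power_one_over field_simps)

lemma takagi_term_lipschitz: "\<bar>takagi_term m x - takagi_term m y\<bar> \<le> 18^m * \<bar>x - y\<bar>"
proof -
  have "\<bar>takagi_term m x - takagi_term m y\<bar> \<le> (1/18)^m * \<bar>18^(2*m) * x - 18^(2*m) * y\<bar>"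
    unfolding takagi_term_diff by (intro mult_left_mono dist_to_int_lipschitz) simp
  also have "\<dots> = ((1/18)^m * 18^(2*m)) * \<bar>x - y\<bar>"
    by (simp only: flip: right_diff_distrib) (simp add: abs_mult)
  also have "\<dots> = 18^m * \<bar>x - y\<bar>"
    by (simp only: takagi_scale)
  finally show ?thesis .
qed

lemma takagi_term_isometric_on_half_cell:
  assumes "of_int j \<le> 2 * 18^(2*m) * x" "2 * 18^(2*m) * x \<le> of_int j + 1"
    and "of_int j \<le> 2 * 18^(2*m) * y" "2 * 18^(2*m) * y \<le> of_int j + 1"
  shows "\<bar>takagi_term m x - takagi_term m y\<bar> = 18^m * \<bar>x - y\<bar>"
proof -
  have "\<bar>takagi_term m x - takagi_term m y\<bar> = (1/18)^m * \<bar>18^(2*m) * x - 18^(2*m) * y\<bar>"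
    unfolding takagi_term_diff using assms
    by (subst dist_to_int_isometric_on_half_cell[of j]) (simp_all add: mult.assoc)
  also have "\<dots> = ((1/18)^m * 18^(2*m)) * \<bar>x - y\<bar>"
    by (simp only: flip: right_diff_distrib) (simp add: abs_mult)
  finally show ?thesis
    by (simp only: takagi_scale)
qed

lemma takagi_split:
  "takagi x = (\<Sum>m<n. takagi_term m x) + takagi_term n x + (\<Sum>i. takagi_term (i + Suc n) x)"
  using suminf_split_initial_segment[OF summable_takagi_term, of x "Suc n"]
  by (simp add: takagi_def)

lemma takagi_tail_bounds:
  "0 \<le> (\<Sum>i. takagi_term (i + Suc n) x)" "(\<Sum>i. takagi_term (i + Suc n) x) \<le> 1 / (34 * 18^n)"
proof -
  have tail: "summable (\<lambda>i. takagi_term (i + Suc n) x)"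
    by (rule summable_ignore_initial_segment[OF summable_takagi_term])
  then show "0 \<le> (\<Sum>i. takagi_term (i + Suc n) x)"
    by (simp add: suminf_nonneg takagi_term_nonneg)
  have geom: "summable (\<lambda>i. (1/18::real)^i)" by (rule summable_geometric) simp
  have "(\<Sum>i. takagi_term (i + Suc n) x) \<le> (\<Sum>i. ((1/18)^Suc n / 2) * (1/18)^i)"
  proof (intro suminf_le tail summable_mult geom)
    show "takagi_term (i + Suc n) x \<le> ((1/18)^Suc n / 2) * (1/18)^i" for i
      using takagi_term_le[of "i + Suc n" x] by (simp add: power_add field_simps)
  qed
  also have "\<dots> = ((1/18)^Suc n / 2) * (\<Sum>i. (1/18)^i)"
    by (rule suminf_mult[OF geom])
  also have "\<dots> = ((1/18)^Suc n / 2) * (1 / (1 - 1/18))"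
    by (subst suminf_geometric) auto
  also have "\<dots> = 1 / (34 * 18^n)"
    by (simp add: power_divide field_simps)
  finally show "(\<Sum>i. takagi_term (i + Suc n) x) \<le> 1 / (34 * 18^n)" .
qed

lemma takagi_partial_sum_lipschitz:
  "\<bar>(\<Sum>m<n. takagi_term m x) - (\<Sum>m<n. takagi_term m y)\<bar> \<le> 18^n / 17 * \<bar>x - y\<bar>"
proof -
  have "\<bar>(\<Sum>m<n. takagi_term m x) - (\<Sum>m<n. takagi_term m y)\<bar>
      \<le> (\<Sum>m<n. \<bar>takagi_term m x - takagi_term m y\<bar>)"
    by (simp add: sum_subtractf[symmetric] sum_abs)
  also have "\<dots> \<le> (\<Sum>m<n. 18^m) * \<bar>x - y\<bar>"
    by (simp add: sum_distrib_right sum_mono takagi_term_lipschitz)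
  also have "(\<Sum>m<n. 18^m) \<le> (18::real)^n / 17"
    by (induction n) auto
  finally show ?thesis
    by (simp add: mult_right_mono)
qed

text \<open>On a half-cell of level \<open>n\<close> the \<open>n\<close>-th term has slope \<open>\<plusminus>18^n\<close>, which beats the
  Lipschitz constant \<open>18^n/17\<close> of the earlier terms; the later terms are uniformly tiny.\<close>
lemma takagi_lower_bound_on_half_cell:
  assumes "of_int j \<le> 2 * 18^(2*n) * x" "2 * 18^(2*n) * x \<le> of_int j + 1"
    and "of_int j \<le> 2 * 18^(2*n) * y" "2 * 18^(2*n) * y \<le> of_int j + 1"
  shows "16/17 * 18^n * \<bar>x - y\<bar> - 1 / (34 * 18^n) \<le> \<bar>takagi x - takagi y\<bar>"
  using takagi_term_isometric_on_half_cell[OF assms]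
    takagi_partial_sum_lipschitz[where n = n and x = x and y = y]
    takagi_tail_bounds[where n = n and x = x] takagi_tail_bounds[where n = n and x = y]
    takagi_split[where n = n and x = x] takagi_split[where n = n and x = y]
  by linarith

lemma lebesgue_cover_by_small_pieces:
  fixes B :: "real set"
  assumes "finite I" "0 \<le> \<delta>" and B: "B \<subseteq> (\<Union>i\<in>I. S i)"
    and small: "\<And>i x y. i \<in> I \<Longrightarrow> x \<in> B \<inter> S i \<Longrightarrow> y \<in> B \<inter> S i \<Longrightarrow> \<bar>x - y\<bar> \<le> \<delta>"
  obtains E where "E \<in> sets lebesgue" "B \<subseteq> E" "emeasure lebesgue E \<le> ennreal (2 * \<delta> * card I)"
proof
  define p where "p i = (SOME x. x \<in> B \<inter> S i)" for i
  define E where "E = (\<Union>i\<in>I. cball (p i) \<delta>)"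
  show "E \<in> sets lebesgue"
    unfolding E_def using \<open>finite I\<close> by auto
  show "B \<subseteq> E"
  proof
    fix x assume "x \<in> B"
    with B obtain i where "i \<in> I" "x \<in> B \<inter> S i" by blast
    moreover from \<open>x \<in> B \<inter> S i\<close> have "p i \<in> B \<inter> S i"
      unfolding p_def by (rule someI)
    ultimately show "x \<in> E"
      using small unfolding E_def by (force simp: dist_real_def)
  qed
  have "emeasure lebesgue E \<le> (\<Sum>i\<in>I. emeasure lebesgue (cball (p i) \<delta>))"
    unfolding E_def by (rule emeasure_subadditive_finite[OF \<open>finite I\<close>]) auto
  also have "\<dots> = (\<Sum>i\<in>I. ennreal (2 * \<delta>))"
    using \<open>0 \<le> \<delta>\<close> by (simp add: cball_eq_atLeastAtMost)
  also have "\<dots> = ennreal (2 * \<delta> * card I)"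
    using \<open>0 \<le> \<delta>\<close> by (simp add: ennreal_mult ennreal_of_nat_eq_real_of_nat mult.commute)
  finally show "emeasure lebesgue E \<le> ennreal (2 * \<delta> * card I)" .
qed

text \<open>Choose the level \<open>n\<close> with \<open>L \<le> 8/17 \<cdot> 18^n\<close>; then points of \<open>B\<close> in a common half-cell
  of that level are \<open>1/(16 \<cdot> 18^(2n))\<close>-close.\<close>
lemma takagi_lipschitz_sets_small:
  assumes B: "B \<subseteq> {0..1}"
    and lip: "\<And>x y. x \<in> B \<Longrightarrow> y \<in> B \<Longrightarrow> \<bar>takagi x - takagi y\<bar> \<le> L * \<bar>x - y\<bar>"
  obtains E where "E \<in> sets lebesgue" "B \<subseteq> E" "emeasure lebesgue E \<le> ennreal (1/2)"
proof -
  obtain n where n: "L * 17 / 8 < (18::real)^n"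
    using real_arch_pow[of 18 "L * 17 / 8"] by auto
  define N :: real where "N = 18^n"
  define b :: real where "b = 18^(2*n)"
  have "b = N * N" "1 \<le> N"
    unfolding b_def N_def by (simp_all only: mult_2 power_add) simp
  then have b: "b = N * N" "1 \<le> b" "0 < N"
    using mult_mono[of 1 N 1 N] by simp_all
  define S where "S j = {x. of_int j \<le> 2 * b * x \<and> 2 * b * x \<le> of_int j + 1}" for j :: int
  define I where "I = {0..\<lfloor>2 * b\<rfloor>}"
  have cover: "B \<subseteq> (\<Union>j\<in>I. S j)"
  proof
    fix x assume "x \<in> B"
    with B b have "0 \<le> 2 * b * x" "2 * b * x \<le> 2 * b" by auto
    then have "\<lfloor>2 * b * x\<rfloor> \<in> I" "x \<in> S \<lfloor>2 * b * x\<rfloor>"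
      unfolding I_def S_def by (auto intro: floor_mono)
    then show "x \<in> (\<Union>j\<in>I. S j)" by blast
  qed
  have close: "\<bar>x - y\<bar> \<le> 1 / (16 * b)" if "x \<in> B \<inter> S j" "y \<in> B \<inter> S j" for j x y
  proof -
    have "16/17 * N * \<bar>x - y\<bar> - 1 / (34 * N) \<le> \<bar>takagi x - takagi y\<bar>"
      using that takagi_lower_bound_on_half_cell[of j n x y] by (simp add: S_def b_def N_def)
    moreover have "\<bar>takagi x - takagi y\<bar> \<le> 8/17 * N * \<bar>x - y\<bar>"
      using lip[of x y] that n mult_right_mono[of L "8/17 * N" "\<bar>x - y\<bar>"]
      by (simp add: N_def)
    ultimately have "8/17 * N * \<bar>x - y\<bar> \<le> 1 / (34 * N)"
      by linarith
    then have "8/17 * N * \<bar>x - y\<bar> * (34 * N) \<le> 1"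
      using b by (simp add: field_simps)
    then show ?thesis
      using b by (simp add: field_simps)
  qed
  obtain E where E: "E \<in> sets lebesgue" "B \<subseteq> E"
      "emeasure lebesgue E \<le> ennreal (2 * (1 / (16 * b)) * card I)"
    by (rule lebesgue_cover_by_small_pieces[of I "1 / (16 * b)" B S])
       (use cover close b in \<open>auto simp: I_def\<close>)
  have "real (card I) \<le> 2 * b + 1"
    unfolding I_def using b by simp
  then have "2 * (1 / (16 * b)) * card I \<le> 1/2"
    using b by (simp add: field_simps)
  with E show ?thesis
    using order_trans ennreal_leI that by blast
qed

lemma countable_isolated_points:
  fixes A :: "'a::second_countable_topology set"
  shows "countable {x\<in>A. \<not> x islimpt A}"
proof -
  obtain \<B> :: "'a set set" where \<B>: "countable \<B>" "\<And>S. open S \<Longrightarrow> \<exists>U\<subseteq>\<B>. S = \<Union>U"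
    by (metis univ_second_countable)
  have "{x\<in>A. \<not> x islimpt A} \<subseteq> (\<Union>C\<in>{C\<in>\<B>. finite (C \<inter> A)}. C \<inter> A)"
  proof
    fix x assume "x \<in> {x\<in>A. \<not> x islimpt A}"
    then obtain T where T: "x \<in> A" "x \<in> T" "open T" "\<And>y. y \<in> A \<Longrightarrow> y \<in> T \<Longrightarrow> y = x"
      unfolding islimpt_def by blast
    then obtain C where "C \<in> \<B>" "x \<in> C" "C \<subseteq> T"
      using \<B>(2) by (metis Union_iff Union_upper subsetD)
    with T have "C \<inter> A = {x}" by blast
    with \<open>C \<in> \<B>\<close> show "x \<in> (\<Union>C\<in>{C\<in>\<B>. finite (C \<inter> A)}. C \<inter> A)" by force
  qed
  moreover have "countable (\<Union>C\<in>{C\<in>\<B>. finite (C \<inter> A)}. C \<inter> A)"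
    by (rule countable_UN[OF countable_Collect[OF \<B>(1)]]) (auto intro: countable_finite)
  ultimately show ?thesis
    by (rule countable_subset)
qed

lemma has_real_derivative_unique_on_coincidence_set:
  assumes "(p has_real_derivative p') (at x)" "(q has_real_derivative q') (at x)"
    and "x islimpt S" "x \<in> S" "\<And>y. y \<in> S \<Longrightarrow> p y = q y"
  shows "p' = q'"
proof -
  have p: "((\<lambda>y. (p y - p x) / (y - x)) \<longlongrightarrow> p') (at x within S)"
    using has_field_derivative_at_within[OF assms(1), of S] by (simp add: has_field_derivative_iff)
  have "((\<lambda>y. (q y - q x) / (y - x)) \<longlongrightarrow> q') (at x within S)"
    using has_field_derivative_at_within[OF assms(2), of S] by (simp add: has_field_derivative_iff)
  moreover have "\<forall>\<^sub>F y in at x within S. (q y - q x) / (y - x) = (p y - p x) / (y - x)"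
    using assms(4,5) by (auto simp: eventually_at_filter intro!: always_eventually)
  ultimately have "((\<lambda>y. (p y - p x) / (y - x)) \<longlongrightarrow> q') (at x within S)"
    by (rule Lim_transform_eventually)
  with p show ?thesis
    by (rule tendsto_unique[rotated]) (simp add: trivial_limit_within \<open>x islimpt S\<close>)
qed

lemma Ck_has_real_derivative:
  assumes "Ck k g" "j < k"
  shows "((deriv ^^ j) g has_real_derivative (deriv ^^ Suc j) g x) (at x)"
  using assms by (simp add: Ck_def DERIV_deriv_iff_real_differentiable)

lemma Ck_continuous_deriv:
  assumes "Ck k g" "j \<le> k"
  shows "continuous_on UNIV ((deriv ^^ j) g)"
proof (cases "j = k")
  case False
  then show ?thesis
    using assms unfolding Ck_def
    by (intro continuous_at_imp_continuous_on ballI differentiable_imp_continuous_within) simp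
qed (use assms in \<open>simp add: Ck_def\<close>)

lemma Ck_deriv2_lipschitz_on_Icc:
  assumes "Ck k g" "3 \<le> k"
  obtains M where "\<And>x y. x \<in> {a..b} \<Longrightarrow> y \<in> {a..b} \<Longrightarrow>
    \<bar>(deriv ^^ 2) g x - (deriv ^^ 2) g y\<bar> \<le> M * \<bar>x - y\<bar>"
proof -
  have "bounded ((deriv ^^ 3) g ` {a..b})"
    by (intro compact_imp_bounded compact_continuous_image compact_Icc
        continuous_on_subset[OF Ck_continuous_deriv[OF assms]]) simp
  then obtain M where M: "\<And>z. z \<in> {a..b} \<Longrightarrow> \<bar>(deriv ^^ 3) g z\<bar> \<le> M"
    unfolding bounded_iff by (auto simp del: atLeastAtMost_iff)
  have "((deriv ^^ 2) g has_real_derivative (deriv ^^ 3) g z) (at z)" for z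
    using Ck_has_real_derivative[OF assms(1), of 2 z] assms(2) by (simp add: numeral_eq_Suc)
  then show ?thesis
    using M by (intro that field_differentiable_bound[of "{a..b}" _ "(deriv ^^ 3) g", unfolded
        real_norm_def]) (auto intro: has_field_derivative_at_within)
qed

lemma Ck_2_of_second_derivative:
  assumes "\<And>x. (f has_real_derivative f' x) (at x)" "\<And>x. (f' has_real_derivative f'' x) (at x)"
    and "continuous_on UNIV f''"
  shows "Ck 2 f"
proof -
  have "deriv f = f'" "deriv f' = f''"
    using assms(1,2) by (auto intro: DERIV_imp_deriv)
  then show ?thesis
    using assms unfolding Ck_def numeral_2_eq_2
    by (auto simp: less_Suc_eq real_differentiable_def)
qed

lemma exists_antiderivative:
  fixes h :: "real \<Rightarrow> real"
  assumes "continuous_on UNIV h"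
  obtains H where "\<And>x. (H has_real_derivative h x) (at x)"
proof -
  have "\<exists>H. \<forall>x::real. -\<infinity> < x \<longrightarrow> x < \<infinity> \<longrightarrow> (H has_vector_derivative h x) (at x)"
    using assms by (intro einterval_antiderivative) (auto simp: continuous_on_eq_continuous_at)
  then show ?thesis
    using that by (auto simp: has_real_derivative_iff_has_vector_derivative)
qed

lemma Liminf_ereal_nonneg_gt_MInfty:
  assumes "\<And>y. 0 \<le> u y"
  shows "-\<infinity> < Liminf F (\<lambda>y. ereal (u y))"
proof -
  have "ereal 0 \<le> Liminf F (\<lambda>y. ereal (u y))"
    using assms by (intro Liminf_bounded always_eventually) simp
  then show ?thesis
    by (rule less_le_trans[rotated]) simp
qed

lemma emeasure_lebesgue_ge_of_unit_interval_cover: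
  fixes U C E :: "real set"
  assumes "{0..1} \<subseteq> U \<union> C \<union> E" "U \<in> sets lebesgue" "C \<in> null_sets lebesgue" "E \<in> sets lebesgue"
    and "emeasure lebesgue E \<le> ennreal (1/2)"
  shows "ennreal (1/2) \<le> emeasure lebesgue U"
proof -
  have "ennreal 1 = emeasure lebesgue {0..1::real}" by simp
  also have "\<dots> \<le> emeasure lebesgue (U \<union> C \<union> E)"
    by (rule emeasure_mono[OF assms(1)]) (use assms(2-4) in auto)
  also have "\<dots> \<le> emeasure lebesgue U + emeasure lebesgue C + emeasure lebesgue E"
    using assms(2-4) by (intro order_trans[OF emeasure_subadditive] add_right_mono emeasure_subadditive) auto
  also have "\<dots> \<le> emeasure lebesgue U + ennreal (1/2)"
    using assms(3,5) by (simp add: null_setsD1 add_left_mono)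
  finally have le: "ennreal 1 \<le> emeasure lebesgue U + ennreal (1/2)" .
  show ?thesis
  proof (cases "emeasure lebesgue U")
    case (real r)
    with le have "ennreal 1 \<le> ennreal (r + 1/2)"
      by (subst ennreal_plus) auto
    then have "1 \<le> r + 1/2"
      by (rule ennreal_le_iff[THEN iffD1, rotated]) (use real in simp)
    then show ?thesis
      unfolding real by (intro ennreal_leI) linarith
  qed simp
qed

lemma takagi_second_antiderivative_far_from_C3:
  assumes df: "\<And>x. (f has_real_derivative f' x) (at x)"
    and df': "\<And>x. (f' has_real_derivative takagi x) (at x)"
    and g: "Ck k g" "3 \<le> k"
  shows "ennreal (1/2) \<le> emeasure lebesgue {x. f x \<noteq> g x}"
proof -
  define A where "A = {x\<in>{0..1}. f x = g x}"
  define A1 where "A1 = {x\<in>A. x islimpt A}"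
  define A2 where "A2 = {x\<in>A1. x islimpt A1}"
  have dg0: "(g has_real_derivative deriv g x) (at x)"
    and dg1: "(deriv g has_real_derivative (deriv ^^ 2) g x) (at x)" for x
    using Ck_has_real_derivative[OF g(1), of 0 x] Ck_has_real_derivative[OF g(1), of 1 x] g(2)
    by (simp_all add: numeral_eq_Suc)
  have f'_eq: "f' x = deriv g x" if "x \<in> A1" for x
  proof (rule has_real_derivative_unique_on_coincidence_set[OF df dg0])
    show "x islimpt A" "x \<in> A" "\<And>y. y \<in> A \<Longrightarrow> f y = g y"
      using that by (simp_all add: A1_def A_def)
  qed
  have takagi_eq: "takagi x = (deriv ^^ 2) g x" if "x \<in> A2" for x
  proof (rule has_real_derivative_unique_on_coincidence_set[OF df' dg1])
    show "x islimpt A1" "x \<in> A1" "\<And>y. y \<in> A1 \<Longrightarrow> f' y = deriv g y"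
      using that f'_eq by (simp_all add: A2_def)
  qed
  obtain M where lipg: "\<And>x y. x \<in> {0..1} \<Longrightarrow> y \<in> {0..1} \<Longrightarrow>
      \<bar>(deriv ^^ 2) g x - (deriv ^^ 2) g y\<bar> \<le> M * \<bar>x - y\<bar>"
    using Ck_deriv2_lipschitz_on_Icc[OF g] by blast
  have A2_sub: "A2 \<subseteq> {0..1}"
    by (auto simp: A2_def A1_def A_def)
  have lip: "\<bar>takagi x - takagi y\<bar> \<le> M * \<bar>x - y\<bar>" if "x \<in> A2" "y \<in> A2" for x y
    using lipg[OF subsetD[OF A2_sub that(1)] subsetD[OF A2_sub that(2)]] takagi_eq[OF that(1)]
      takagi_eq[OF that(2)]
    by simp
  obtain E where E: "E \<in> sets lebesgue" "A2 \<subseteq> E" "emeasure lebesgue E \<le> ennreal (1/2)"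
    using takagi_lipschitz_sets_small[OF A2_sub lip] by blast
  define C where "C = {x\<in>A. \<not> x islimpt A} \<union> {x\<in>A1. \<not> x islimpt A1}"
  have "C \<in> null_sets lebesgue"
    unfolding C_def by (intro countable_imp_null_set_lborel null_sets_completionI countable_Un
        countable_isolated_points)
  moreover have "{0..1} \<subseteq> {x. f x \<noteq> g x} \<union> C \<union> E"
    using E(2) by (auto simp: C_def A2_def A1_def A_def)
  moreover have "open {x. f x \<noteq> g x}"
    using df dg0 by (intro open_Collect_neq continuous_at_imp_continuous_on ballI DERIV_isCont) auto
  ultimately show ?thesis
    using E by (intro emeasure_lebesgue_ge_of_unit_interval_cover) auto
qed

theorem mainTheorem10:
  shows "\<exists>f :: real \<Rightarrow> real. Ck 2 f
     \<and> (\<forall>x. \<exists>P :: real poly. degree P \<le> 2 \<and>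
           (\<forall>k::real. k > 2 \<longrightarrow>
              Liminf (at x) (\<lambda>y. ereal ((f y - poly P y) / \<bar>y - x\<bar> powr k)) > -\<infinity>))
     \<and> (\<forall>k::nat. k \<ge> 3 \<longrightarrow>
          (\<exists>\<epsilon>::real. \<epsilon> > 0 \<and>
             (\<forall>g. Ck k g \<longrightarrow> emeasure lebesgue {x. f x \<noteq> g x} > ennreal \<epsilon>)))"
proof -
  obtain H where dH: "\<And>x. (H has_real_derivative takagi x) (at x)"
    using exists_antiderivative[OF continuous_takagi] by blast
  then have "continuous_on UNIV H"
    by (intro continuous_at_imp_continuous_on ballI DERIV_isCont)
  then obtain F where dF: "\<And>x. (F has_real_derivative H x) (at x)"
    using exists_antiderivative by blast
  have convex: "convex_on UNIV F"
    using dF dH takagi_nonneg by (intro f''_ge0_imp_convex) auto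
  have "\<exists>P :: real poly. degree P \<le> 2 \<and> (\<forall>k::real. k > 2 \<longrightarrow>
      Liminf (at x) (\<lambda>y. ereal ((F y - poly P y) / \<bar>y - x\<bar> powr k)) > -\<infinity>)" for x
  proof (intro exI[of _ "[:F x - H x * x, H x:]"] conjI allI impI)
    have "0 \<le> F y - poly [:F x - H x * x, H x:] y" for y
      using convex_on_imp_above_tangent[OF convex, where c = x and x = y and f' = "H x"] dF
      by (auto simp: algebra_simps has_field_derivative_at_within)
    then show "Liminf (at x) (\<lambda>y. ereal ((F y - poly [:F x - H x * x, H x:] y) / \<bar>y - x\<bar> powr k))
        > -\<infinity>" for k
      by (intro Liminf_ereal_nonneg_gt_MInfty divide_nonneg_nonneg) auto
  qed (simp add: degree_pCons_le)
  moreover have "ennreal (1/4) < emeasure lebesgue {x. F x \<noteq> g x}" if "Ck k g" "3 \<le> k" for k g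
    by (rule less_le_trans[OF ennreal_lessI takagi_second_antiderivative_far_from_C3[OF dF dH that]]) simp_all
  ultimately show ?thesis
    using Ck_2_of_second_derivative[OF dF dH continuous_takagi]
    by (intro exI[of _ F] conjI allI impI exI[of _ "1/4"]) auto
qed

end
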